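(* Let $\Psi\subset\hat G$, let $R_\Psi$ be the associated character group ring, and let $x\in R_\Psi$ be a non-zerodivisor. Then $\#R_\Psi/(x)=\#\mathcal{O}/\big(\prod_{\psi\in\Psi}\psi(x)\big)$.
   Context: $G$ is a finite abelian group, $p$ an odd prime, $\mathcal{O}$ a finite extension of $\mathbf{Z}_p$ containing all values of all characters $G\to\overline{\mathbf{Q}}_p^*$, and $\hat G$ the set of these characters. For $\Psi\subset\hat G$, the character group ring $R_\Psi$ is the image of $\mathcal{O}[G]\to\prod_{\psi\in\Psi}\mathcal{O}$, $x\mapsto(\psi(x))_{\psi}$, and $\psi(x)$ for $x\in R_\Psi$ denotes the $\psi$-coordinate. *)

theory Defs
  imports "HOL-Algebra.Ring_Divisibility" "HOL-Algebra.QuotRing" "HOL-Algebra.Multiplicative_Group" "HOL-Computational_Algebra.Primes"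
begin

definition Zp :: "int \<Rightarrow> (nat \<Rightarrow> int) ring" where
  "Zp p = \<lparr> carrier = {f. (\<forall>n. 0 \<le> f n \<and> f n < p ^ n) \<and> (\<forall>n. f (Suc n) mod p ^ n = f n)},
            mult = (\<lambda>f g n. (f n * g n) mod p ^ n),
            one = (\<lambda>n. 1 mod p ^ n),
            zero = (\<lambda>n. 0),
            add = (\<lambda>f g n. (f n + g n) mod p ^ n) \<rparr>"

text \<open>O is a finite extension of Z_p: a principal ideal domain (so a DVR, the ring
  of integers of a finite extension of Q_p) together with an injective ring homomorphism
  iota : Z_p -> Ok making Ok a finitely generated Z_p-module.\<close>

definition finite_ext_Zp :: "int \<Rightarrow> ('a, 'b) ring_scheme \<Rightarrow> ((nat \<Rightarrow> int) \<Rightarrow> 'a) \<Rightarrow> bool" where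
  "finite_ext_Zp p Ok iota \<longleftrightarrow>
     principal_domain Ok \<and>
     iota \<in> ring_hom (Zp p) Ok \<and> inj_on iota (carrier (Zp p)) \<and>
     (\<exists>B. finite B \<and> B \<subseteq> carrier Ok \<and>
        (\<forall>a \<in> carrier Ok. \<exists>c. c \<in> (B \<rightarrow> carrier (Zp p)) \<and>
            a = (\<Oplus>\<^bsub>Ok\<^esub> b\<in>B. iota (c b) \<otimes>\<^bsub>Ok\<^esub> b)))"

text \<open>Since O contains all character values, the characters of G with values in
  an algebraic closure of Q_p are exactly the group homomorphisms G -> Ok^*.\<close>

definition characters :: "('g, 'c) monoid_scheme \<Rightarrow> ('a, 'b) ring_scheme \<Rightarrow> ('g \<Rightarrow> 'a) set" where
  "characters G Ok = {\<chi>. \<chi> \<in> hom G (units_of Ok) \<and> \<chi> \<in> extensional (carrier G)}"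

text \<open>O contains all values of all characters of G: for every g in G it contains a
  primitive ord(g)-th root of unity.\<close>

definition contains_char_values :: "('g, 'c) monoid_scheme \<Rightarrow> ('a, 'b) ring_scheme \<Rightarrow> bool" where
  "contains_char_values G Ok \<longleftrightarrow>
     (\<forall>g \<in> carrier G. \<exists>\<zeta> \<in> carrier Ok. \<zeta> [^]\<^bsub>Ok\<^esub> group.ord G g = \<one>\<^bsub>Ok\<^esub> \<and>
         (\<forall>k. 0 < k \<and> k < group.ord G g \<longrightarrow> \<zeta> [^]\<^bsub>Ok\<^esub> k \<noteq> \<one>\<^bsub>Ok\<^esub>))"

text \<open>psi(x) for x in O[G] (x a function carrier G -> O).\<close>

definition char_eval :: "('g, 'c) monoid_scheme \<Rightarrow> ('a, 'b) ring_scheme \<Rightarrow> ('g \<Rightarrow> 'a) \<Rightarrow> ('g \<Rightarrow> 'a) \<Rightarrow> 'a" where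
  "char_eval G Ok \<psi> a = (\<Oplus>\<^bsub>Ok\<^esub> g\<in>carrier G. a g \<otimes>\<^bsub>Ok\<^esub> \<psi> g)"

text \<open>R_Psi: image of O[G] in prod_{psi in Psi} O, elements are functions Psi -> O
  (extensional on Psi); ring operations are componentwise.\<close>

definition char_group_ring :: "('g, 'c) monoid_scheme \<Rightarrow> ('a, 'b) ring_scheme \<Rightarrow> ('g \<Rightarrow> 'a) set \<Rightarrow> (('g \<Rightarrow> 'a) \<Rightarrow> 'a) set" where
  "char_group_ring G Ok \<Psi> =
     {(\<lambda>\<psi>\<in>\<Psi>. char_eval G Ok \<psi> a) | a. a \<in> (carrier G \<rightarrow> carrier Ok)}"

definition cw_mult :: "('a, 'b) ring_scheme \<Rightarrow> 'i set \<Rightarrow> ('i \<Rightarrow> 'a) \<Rightarrow> ('i \<Rightarrow> 'a) \<Rightarrow> ('i \<Rightarrow> 'a)" where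
  "cw_mult Ok I x y = (\<lambda>i\<in>I. x i \<otimes>\<^bsub>Ok\<^esub> y i)"

definition cw_add :: "('a, 'b) ring_scheme \<Rightarrow> 'i set \<Rightarrow> ('i \<Rightarrow> 'a) \<Rightarrow> ('i \<Rightarrow> 'a) \<Rightarrow> ('i \<Rightarrow> 'a)" where
  "cw_add Ok I x y = (\<lambda>i\<in>I. x i \<oplus>\<^bsub>Ok\<^esub> y i)"

definition cw_zero :: "('a, 'b) ring_scheme \<Rightarrow> 'i set \<Rightarrow> ('i \<Rightarrow> 'a)" where
  "cw_zero Ok I = (\<lambda>i\<in>I. \<zero>\<^bsub>Ok\<^esub>)"

definition non_zerodivisor :: "('a, 'b) ring_scheme \<Rightarrow> 'i set \<Rightarrow> ('i \<Rightarrow> 'a) set \<Rightarrow> ('i \<Rightarrow> 'a) \<Rightarrow> bool" where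
  "non_zerodivisor Ok I R x \<longleftrightarrow>
     x \<in> R \<and> (\<forall>y \<in> R. cw_mult Ok I x y = cw_zero Ok I \<longrightarrow> y = cw_zero Ok I)"

definition quot_principal :: "('a, 'b) ring_scheme \<Rightarrow> 'i set \<Rightarrow> ('i \<Rightarrow> 'a) set \<Rightarrow> ('i \<Rightarrow> 'a) \<Rightarrow> ('i \<Rightarrow> 'a) set set" where
  "quot_principal Ok I R x = (\<lambda>y. {cw_add Ok I y (cw_mult Ok I x w) | w. w \<in> R}) ` R"

end

theory Submission
  imports Defs "HOL-Algebra.Product_Groups" "HOL-Algebra.Polynomial_Divisibility"
begin

(*
  Let A = O^Psi with componentwise operations, so that R_Psi is an additive subgroup of A that is
  stable under multiplication by x. Orthogonality of characters gives |G| A <= R_Psi, and O/|G|O is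
  finite because |G| = p^v u with u a unit of Z_p while O is finitely generated over Z_p; hence R_Psi
  has finite index in A. As x is a non-zerodivisor, every coordinate x(psi) is nonzero (test x
  against the element of R_Psi that is |G| at psi and 0 elsewhere), so multiplication by x is
  injective on A. Computing [A : x R_Psi] once through R_Psi and once through x A, where
  [x A : x R_Psi] = [A : R_Psi] is finite, gives
    [R_Psi : x R_Psi] = [A : x A] = prod_psi #O/(x(psi)) = #O/(prod_psi x(psi)),
  the last step by multiplicativity of #O/(a) in a domain.
*)

lemma card_image_eq_if_same_fibres:
  assumes "\<And>y y'. y \<in> S \<Longrightarrow> y' \<in> S \<Longrightarrow> f y = f y' \<longleftrightarrow> g y = g y'"
  shows "card (f ` S) = card (g ` S)"
proof -
  define h where "h = (\<lambda>c. g (inv_into S f c))"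
  have h: "h (f y) = g y" if "y \<in> S" for y
  proof -
    have "inv_into S f (f y) \<in> S" "f (inv_into S f (f y)) = f y"
      by (simp_all add: that inv_into_into f_inv_into_f)
    then show ?thesis using assms that unfolding h_def by blast
  qed
  then have "g ` S = h ` f ` S" by (simp add: image_image)
  moreover have "inj_on h (f ` S)" using h assms by (auto simp: inj_on_def)
  ultimately show ?thesis by (simp add: card_image)
qed

lemma restrict_image_PiE:
  "(\<lambda>y. \<lambda>i\<in>I. f i (y i)) ` PiE I A = PiE I (\<lambda>i. f i ` A i)"
proof
  show "PiE I (\<lambda>i. f i ` A i) \<subseteq> (\<lambda>y. \<lambda>i\<in>I. f i (y i)) ` PiE I A"
  proof
    fix \<phi> assume \<phi>: "\<phi> \<in> PiE I (\<lambda>i. f i ` A i)"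
    define y where "y = (\<lambda>i\<in>I. SOME a. a \<in> A i \<and> f i a = \<phi> i)"
    have "y i \<in> A i \<and> f i (y i) = \<phi> i" if "i \<in> I" for i
      using someI_ex[of "\<lambda>a. a \<in> A i \<and> f i a = \<phi> i"] \<phi> that unfolding y_def by force
    then show "\<phi> \<in> (\<lambda>y. \<lambda>i\<in>I. f i (y i)) ` PiE I A"
      using \<phi> by (intro image_eqI[of _ _ y])
        (auto simp: y_def PiE_iff extensional_restrict intro!: extensionalityI[of \<phi> I])
  qed
qed auto

lemma (in comm_monoid) finprod_swap:
  assumes "finite A" "finite B" "\<And>a b. a \<in> A \<Longrightarrow> b \<in> B \<Longrightarrow> f a b \<in> carrier G"
  shows "(\<Otimes>a\<in>A. \<Otimes>b\<in>B. f a b) = (\<Otimes>b\<in>B. \<Otimes>a\<in>A. f a b)"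
  using assms
proof (induction A rule: finite_induct)
  case (insert x A)
  have closed: "(\<lambda>b. f x b) \<in> B \<rightarrow> carrier G" "(\<lambda>b. \<Otimes>a\<in>A. f a b) \<in> B \<rightarrow> carrier G"
    "(\<lambda>a. \<Otimes>b\<in>B. f a b) \<in> A \<rightarrow> carrier G"
    using insert.prems by (auto intro: finprod_closed)
  have "(\<Otimes>a\<in>insert x A. \<Otimes>b\<in>B. f a b) = (\<Otimes>b\<in>B. f x b) \<otimes> (\<Otimes>a\<in>A. \<Otimes>b\<in>B. f a b)"
    using insert closed by (intro finprod_insert) (auto intro: finprod_closed)
  also have "\<dots> = (\<Otimes>b\<in>B. f x b) \<otimes> (\<Otimes>b\<in>B. \<Otimes>a\<in>A. f a b)"
    using insert by simp
  also have "\<dots> = (\<Otimes>b\<in>B. f x b \<otimes> (\<Otimes>a\<in>A. f a b))"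
    using closed by (intro finprod_multf[symmetric])
  also have "\<dots> = (\<Otimes>b\<in>B. \<Otimes>a\<in>insert x A. f a b)"
    using insert by (intro finprod_cong') (auto simp: finprod_insert Pi_iff intro: finprod_closed)
  finally show ?case .
qed simp

section \<open>Indices of subgroups\<close>

(* The index [K : H]; it is 0 when infinite, and the lemmas below cover that case too. *)
definition subgroup_index :: "('a, 'b) monoid_scheme \<Rightarrow> 'a set \<Rightarrow> 'a set \<Rightarrow> nat" where
  "subgroup_index G H K = card ((\<lambda>a. H #>\<^bsub>G\<^esub> a) ` K)"

context group
begin

lemma rcos_eq_iff:
  assumes "subgroup H G" "a \<in> carrier G" "b \<in> carrier G"
  shows "H #> a = H #> b \<longleftrightarrow> a \<otimes> inv b \<in> H"
  using assms subgroup.rcos_module[OF assms(1) is_group] rcos_self repr_independence by metis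

lemma rcos_mult_right_eq_iff:
  assumes "subgroup H G" "a \<in> carrier G" "b \<in> carrier G" "r \<in> carrier G"
  shows "H #> (a \<otimes> r) = H #> (b \<otimes> r) \<longleftrightarrow> H #> a = H #> b"
proof -
  have "(a \<otimes> r) \<otimes> inv (b \<otimes> r) = a \<otimes> inv b"
    using assms(2-4) by (simp add: inv_mult_group m_assoc flip: m_assoc[of r "inv r"])
  then show ?thesis using rcos_eq_iff[OF assms(1)] assms(2-4) by simp
qed

lemma subgroup_index_tower:
  assumes H: "subgroup H G" and K: "subgroup K G" and S: "subgroup S G"
    and "H \<subseteq> K" "K \<subseteq> S"
  shows "subgroup_index G H S = subgroup_index G K S * subgroup_index G H K"
proof -
  have SG: "S \<subseteq> carrier G" and KG: "K \<subseteq> carrier G"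
    using S K subgroup.subset by auto
  (* With a representative chosen in each K-coset, H a corresponds to (K a, H (a rep(K a)^-1)). *)
  define rep where "rep C = (SOME s. s \<in> S \<and> C = K #> s)" for C
  have rep: "rep (K #> a) \<in> S \<and> K #> rep (K #> a) = K #> a" if "a \<in> S" for a
    using someI_ex[of "\<lambda>s. s \<in> S \<and> K #> a = K #> s"] that unfolding rep_def by auto
  have rep_K: "a \<otimes> inv rep (K #> a) \<in> K" if "a \<in> S" for a
    using rep[OF that] rcos_eq_iff[OF K] that SG by auto
  define \<phi> where "\<phi> a = (K #> a, H #> (a \<otimes> inv rep (K #> a)))" for a
  have "subgroup_index G H S = card (\<phi> ` S)"
    unfolding subgroup_index_def
  proof (rule card_image_eq_if_same_fibres)
    fix a b assume ab: "a \<in> S" "b \<in> S"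
    then have abG: "a \<in> carrier G" "b \<in> carrier G" "rep (K #> a) \<in> carrier G"
      using rep SG by auto
    have "H #> a = H #> b \<Longrightarrow> K #> a = K #> b"
      using rcos_eq_iff[OF H] rcos_eq_iff[OF K] abG \<open>H \<subseteq> K\<close> by auto
    then show "H #> a = H #> b \<longleftrightarrow> \<phi> a = \<phi> b"
      using rcos_mult_right_eq_iff[OF H abG(1,2) inv_closed[OF abG(3)]] unfolding \<phi>_def by auto
  qed
  also have "\<phi> ` S = ((\<lambda>a. K #> a) ` S) \<times> ((\<lambda>k. H #> k) ` K)"
  proof
    show "\<phi> ` S \<subseteq> ((\<lambda>a. K #> a) ` S) \<times> ((\<lambda>k. H #> k) ` K)"
      using rep_K unfolding \<phi>_def by auto
  next
    show "((\<lambda>a. K #> a) ` S) \<times> ((\<lambda>k. H #> k) ` K) \<subseteq> \<phi> ` S"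
    proof clarify
      fix s k assume s: "s \<in> S" and k: "k \<in> K"
      let ?r = "rep (K #> s)"
      have r: "?r \<in> S" "K #> ?r = K #> s" using rep[OF s] by auto
      have kr: "k \<otimes> ?r \<in> S" using subgroup.m_closed[OF S] k r(1) \<open>K \<subseteq> S\<close> by auto
      have G: "k \<in> carrier G" "?r \<in> carrier G" using k r(1) KG SG by auto
      have "K #> (k \<otimes> ?r) = K #> ?r"
        using rcos_eq_iff[OF K] G k by (simp add: m_assoc)
      then have "K #> (k \<otimes> ?r) = K #> s" using r(2) by simp
      moreover have "k \<otimes> ?r \<otimes> inv ?r = k" using G by (simp add: m_assoc)
      ultimately have "\<phi> (k \<otimes> ?r) = (K #> s, H #> k)" unfolding \<phi>_def by simp
      then show "(K #> s, H #> k) \<in> \<phi> ` S" using kr by (metis imageI)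
    qed
  qed
  finally show ?thesis unfolding subgroup_index_def by (simp add: card_cartesian_product)
qed

end

lemma (in group_hom) subgroup_index_image:
  assumes "inj_on h (carrier G)" "subgroup A G" "B \<subseteq> carrier G"
  shows "subgroup_index H (h ` A) (h ` B) = subgroup_index G A B"
proof -
  have hA: "subgroup (h ` A) H" by (rule subgroup_img_is_subgroup[OF assms(2)])
  have "card ((\<lambda>b. h ` A #>\<^bsub>H\<^esub> h b) ` B) = card ((\<lambda>b. A #> b) ` B)"
  proof (rule card_image_eq_if_same_fibres)
    fix b b' assume "b \<in> B" "b' \<in> B"
    then have b: "b \<in> carrier G" "b' \<in> carrier G" using assms(3) by auto
    have "h (b \<otimes> inv b') = h b \<otimes>\<^bsub>H\<^esub> inv\<^bsub>H\<^esub> h b'" using b by simp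
    then have "h ` A #>\<^bsub>H\<^esub> h b = h ` A #>\<^bsub>H\<^esub> h b' \<longleftrightarrow> h (b \<otimes> inv b') \<in> h ` A"
      using H.rcos_eq_iff[OF hA] b by simp
    also have "\<dots> \<longleftrightarrow> b \<otimes> inv b' \<in> A"
      by (rule inj_on_image_mem_iff[OF assms(1)]) (use b subgroup.subset[OF assms(2)] in auto)
    finally show "h ` A #>\<^bsub>H\<^esub> h b = h ` A #>\<^bsub>H\<^esub> h b' \<longleftrightarrow> A #> b = A #> b'"
      using G.rcos_eq_iff[OF assms(2) b] by simp
  qed
  then show ?thesis unfolding subgroup_index_def by (simp add: image_image)
qed

lemma (in group) subgroup_index_endomorphism_image:
  assumes f: "f \<in> hom G G" "inj_on f (carrier G)"
    and R: "subgroup R G" "f ` R \<subseteq> R" and fin: "subgroup_index G R (carrier G) \<noteq> 0"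
  shows "subgroup_index G (f ` R) R = subgroup_index G (f ` carrier G) (carrier G)"
proof -
  (* [G : f R] = [G : R] [R : f R] = [G : f G] [f G : f R], and [f G : f R] = [G : R]. *)
  interpret f: group_hom G G f using f(1) by unfold_locales
  have sub: "subgroup (f ` R) G" "subgroup (f ` carrier G) G"
    using f.subgroup_img_is_subgroup R(1) subgroup_self by auto
  have RG: "R \<subseteq> carrier G" using R(1) subgroup.subset by auto
  have fG: "f ` carrier G \<subseteq> carrier G" using f.hom_closed by auto
  have "subgroup_index G R (carrier G) * subgroup_index G (f ` R) R
      = subgroup_index G (f ` R) (carrier G)"
    using subgroup_index_tower[OF sub(1) R(1) subgroup_self R(2) RG] by simp
  also have "\<dots> = subgroup_index G (f ` carrier G) (carrier G) * subgroup_index G R (carrier G)"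
    using subgroup_index_tower[OF sub subgroup_self] f.subgroup_index_image[OF f(2) R(1) subset_refl]
      image_mono[OF RG, of f] fG by simp
  finally show ?thesis using fin by simp
qed

lemma subgroup_index_product_group:
  assumes "finite I" and G: "\<And>i. i \<in> I \<Longrightarrow> group (G i)"
    and H: "\<And>i. i \<in> I \<Longrightarrow> subgroup (H i) (G i)"
  shows "subgroup_index (product_group I G) (PiE I H) (carrier (product_group I G))
       = (\<Prod>i\<in>I. subgroup_index (G i) (H i) (carrier (G i)))"
proof -
  let ?P = "product_group I G"
  interpret P: group ?P using G by simp
  have PH: "subgroup (PiE I H) ?P" using PiE_subgroup_product_group G H by blast
  have "subgroup_index ?P (PiE I H) (carrier ?P)
      = card ((\<lambda>y. \<lambda>i\<in>I. H i #>\<^bsub>G i\<^esub> y i) ` carrier ?P)"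
    unfolding subgroup_index_def
  proof (rule card_image_eq_if_same_fibres)
    fix y y' assume y: "y \<in> carrier ?P" "y' \<in> carrier ?P"
    then have yi: "y i \<in> carrier (G i)" "y' i \<in> carrier (G i)" if "i \<in> I" for i
      using that by auto
    have "PiE I H #>\<^bsub>?P\<^esub> y = PiE I H #>\<^bsub>?P\<^esub> y'
        \<longleftrightarrow> (\<forall>i\<in>I. y i \<otimes>\<^bsub>G i\<^esub> inv\<^bsub>G i\<^esub> y' i \<in> H i)"
      using P.rcos_eq_iff[OF PH y] y G by (simp add: PiE_iff)
    also have "\<dots> \<longleftrightarrow> (\<forall>i\<in>I. H i #>\<^bsub>G i\<^esub> y i = H i #>\<^bsub>G i\<^esub> y' i)"
      using group.rcos_eq_iff[OF G H yi] by simp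
    finally show "PiE I H #>\<^bsub>?P\<^esub> y = PiE I H #>\<^bsub>?P\<^esub> y'
        \<longleftrightarrow> (\<lambda>i\<in>I. H i #>\<^bsub>G i\<^esub> y i) = (\<lambda>i\<in>I. H i #>\<^bsub>G i\<^esub> y' i)"
      by (force simp: fun_eq_iff)
  qed
  also have "\<dots> = card (PiE I (\<lambda>i. (\<lambda>a. H i #>\<^bsub>G i\<^esub> a) ` carrier (G i)))"
    using restrict_image_PiE[where f = "\<lambda>i a. H i #>\<^bsub>G i\<^esub> a" and A = "\<lambda>i. carrier (G i)"] by simp
  finally show ?thesis by (simp add: card_PiE[OF assms(1)] subgroup_index_def)
qed

section \<open>Principal ideals and componentwise multiplication on \<open>R\<^sup>I\<close>\<close>

abbreviation cw_add_group :: "('a, 'b) ring_scheme \<Rightarrow> 'i set \<Rightarrow> ('i \<Rightarrow> 'a) monoid" where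
  "cw_add_group R I \<equiv> product_group I (\<lambda>_. add_monoid R)"

lemma carrier_Quot_eq_image: "carrier (R Quot I) = (\<lambda>a. I +>\<^bsub>R\<^esub> a) ` carrier R"
  unfolding FactRing_def A_RCOSETS_def RCOSETS_def a_r_coset_def by auto

lemma card_Quot_eq_subgroup_index:
  "card (carrier (R Quot I)) = subgroup_index (add_monoid R) I (carrier R)"
  unfolding subgroup_index_def carrier_Quot_eq_image a_r_coset_def ..

context cring
begin

lemma subgroup_PIdl: "a \<in> carrier R \<Longrightarrow> subgroup (PIdl a) (add_monoid R)"
  using additive_subgroup.a_subgroup[OF ideal.axioms(1)[OF cgenideal_ideal]] by blast

lemma mult_image_carrier: "c \<in> carrier R \<Longrightarrow> (\<lambda>w. c \<otimes> w) ` carrier R = PIdl c"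
  unfolding cgenideal_def using m_comm by auto

lemma PIdl_mult_subset:
  assumes "a \<in> carrier R" "b \<in> carrier R"
  shows "PIdl (a \<otimes> b) \<subseteq> PIdl a"
proof
  fix x assume "x \<in> PIdl (a \<otimes> b)"
  then obtain y where "y \<in> carrier R" "x = y \<otimes> (a \<otimes> b)" unfolding cgenideal_def by blast
  then have "y \<otimes> b \<in> carrier R" "x = (y \<otimes> b) \<otimes> a" using assms by (simp_all add: m_ac)
  then show "x \<in> PIdl a" unfolding cgenideal_def by blast
qed

lemma finite_Quot_PIdl_mono:
  assumes "a \<in> carrier R" "b \<in> carrier R" "PIdl a \<subseteq> PIdl b" "finite (carrier (R Quot PIdl a))"
  shows "finite (carrier (R Quot PIdl b))"
proof -
  have "carrier (R Quot PIdl a) \<noteq> {}" using assms(1) by (auto simp: carrier_Quot_eq_image)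
  then have "subgroup_index (add_monoid R) (PIdl a) (carrier R) \<noteq> 0"
    using assms(4) card_Quot_eq_subgroup_index by (metis card_0_eq)
  moreover have "subgroup_index (add_monoid R) (PIdl a) (carrier R)
      = subgroup_index (add_monoid R) (PIdl b) (carrier R) * subgroup_index (add_monoid R) (PIdl a) (PIdl b)"
    by (rule group.subgroup_index_tower[OF a_group])
      (use assms subgroup_PIdl group.subgroup_self[OF a_group] subgroup.subset[OF subgroup_PIdl[OF assms(2)]] in auto)
  ultimately show ?thesis
    using card_Quot_eq_subgroup_index card.infinite by (metis mult_eq_0_iff)
qed

lemma finsum_mem_PIdl_rcoset:
  assumes d: "d \<in> carrier R" and B: "finite B" "B \<subseteq> carrier R"
    and s: "s \<in> B \<rightarrow> carrier R" and y: "y \<in> B \<rightarrow> carrier R"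
  shows "(\<Oplus>b\<in>B. (s b \<oplus> d \<otimes> y b) \<otimes> b) \<in> PIdl d +> (\<Oplus>b\<in>B. s b \<otimes> b)"
proof -
  let ?r = "\<Oplus>b\<in>B. s b \<otimes> b" and ?y = "\<Oplus>b\<in>B. y b \<otimes> b"
  have closed: "s b \<in> carrier R" "y b \<in> carrier R" "b \<in> carrier R" if "b \<in> B" for b
    using s y B that by auto
  have r: "?r \<in> carrier R" and y: "?y \<in> carrier R"
    using closed by (auto intro: finsum_closed)
  have "(\<Oplus>b\<in>B. (s b \<oplus> d \<otimes> y b) \<otimes> b) = (\<Oplus>b\<in>B. s b \<otimes> b \<oplus> d \<otimes> (y b \<otimes> b))"
    using closed d by (intro finsum_cong') (auto simp: l_distr m_assoc)
  also have "\<dots> = ?r \<oplus> (\<Oplus>b\<in>B. d \<otimes> (y b \<otimes> b))"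
    by (rule finsum_addf) (use closed d in auto)
  also have "(\<Oplus>b\<in>B. d \<otimes> (y b \<otimes> b)) = d \<otimes> ?y"
    by (rule finsum_rdistr[symmetric]) (use B closed d in auto)
  also have "?r \<oplus> d \<otimes> ?y = d \<otimes> ?y \<oplus> ?r"
    using a_comm[OF r m_closed[OF d y]] .
  moreover have "d \<otimes> ?y \<in> PIdl d"
    unfolding cgenideal_def using d y m_comm by blast
  ultimately show ?thesis
    using a_rcosI subgroup.subset[OF subgroup_PIdl[OF d]] r by simp
qed

lemma finite_Quot_PIdl_if_finite_residues:
  assumes d: "d \<in> carrier R" and B: "finite B" "B \<subseteq> carrier R" and D: "finite D" "D \<subseteq> carrier R"
    and span: "\<And>a. a \<in> carrier R \<Longrightarrow> \<exists>c\<in>B \<rightarrow> C. a = (\<Oplus>b\<in>B. c b \<otimes> b)"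
    and residues: "\<And>c. c \<in> C \<Longrightarrow> \<exists>s\<in>D. \<exists>y\<in>carrier R. c = s \<oplus> d \<otimes> y"
  shows "finite (carrier (R Quot PIdl d))"
proof (rule finite_subset)
  show "finite ((\<lambda>s. PIdl d +> (\<Oplus>b\<in>B. s b \<otimes> b)) ` (B \<rightarrow>\<^sub>E D))"
    using B D by (intro finite_imageI finite_PiE) auto
  show "carrier (R Quot PIdl d) \<subseteq> (\<lambda>s. PIdl d +> (\<Oplus>b\<in>B. s b \<otimes> b)) ` (B \<rightarrow>\<^sub>E D)"
  proof (clarsimp simp: carrier_Quot_eq_image)
    fix a assume "a \<in> carrier R"
    then obtain c where c: "c \<in> B \<rightarrow> C" and a: "a = (\<Oplus>b\<in>B. c b \<otimes> b)"
      using span by blast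
    have "\<forall>b\<in>B. \<exists>s. s \<in> D \<and> (\<exists>y. y \<in> carrier R \<and> c b = s \<oplus> d \<otimes> y)"
      using residues funcset_mem[OF c] by blast
    then obtain s where s: "\<forall>b\<in>B. s b \<in> D \<and> (\<exists>y. y \<in> carrier R \<and> c b = s b \<oplus> d \<otimes> y)"
      by (elim bchoice[THEN exE])
    then have "\<forall>b\<in>B. \<exists>y. y \<in> carrier R \<and> c b = s b \<oplus> d \<otimes> y" by blast
    then obtain y where y: "\<forall>b\<in>B. y b \<in> carrier R \<and> c b = s b \<oplus> d \<otimes> y b"
      by (elim bchoice[THEN exE])
    have closed: "s b \<in> carrier R" "y b \<in> carrier R" "b \<in> carrier R" if "b \<in> B" for b
      using s y that subsetD[OF D(2)] subsetD[OF B(2)] by auto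
    have "a = (\<Oplus>b\<in>B. (s b \<oplus> d \<otimes> y b) \<otimes> b)"
      unfolding a using y closed d by (intro finsum_cong') auto
    also have "\<dots> \<in> PIdl d +> (\<Oplus>b\<in>B. s b \<otimes> b)"
      using closed by (intro finsum_mem_PIdl_rcoset[OF d B]) auto
    finally have a_mem: "a \<in> PIdl d +> (\<Oplus>b\<in>B. s b \<otimes> b)" .
    have "(\<Oplus>b\<in>B. s b \<otimes> b) \<in> carrier R"
      using closed by (intro finsum_closed) auto
    then have "PIdl d +> a = PIdl d +> (\<Oplus>b\<in>B. s b \<otimes> b)"
      using a_repr_independence[OF a_mem _ subgroup_PIdl[OF d]] by simp
    also have "(\<Oplus>b\<in>B. s b \<otimes> b) = (\<Oplus>b\<in>B. restrict s B b \<otimes> b)"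
      using closed by (intro finsum_cong') auto
    finally have "PIdl d +> a = (\<lambda>s. PIdl d +> (\<Oplus>b\<in>B. s b \<otimes> b)) (restrict s B)"
      by simp
    moreover have "restrict s B \<in> B \<rightarrow>\<^sub>E D" using s by auto
    ultimately show "PIdl d +> a \<in> (\<lambda>s. PIdl d +> (\<Oplus>b\<in>B. s b \<otimes> b)) ` (B \<rightarrow>\<^sub>E D)"
      by (rule image_eqI)
  qed
qed

lemma group_cw_add_group: "group (cw_add_group R I)"
  by (simp add: a_group)

lemma cw_mult_hom:
  assumes "c \<in> PiE I (\<lambda>_. carrier R)"
  shows "cw_mult R I c \<in> hom (cw_add_group R I) (cw_add_group R I)"
  using assms by (intro homI) (auto simp: cw_mult_def PiE_iff r_distr intro!: restrict_ext)

lemma cw_mult_image: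
  assumes "c \<in> PiE I (\<lambda>_. carrier R)"
  shows "cw_mult R I c ` carrier (cw_add_group R I) = PiE I (\<lambda>i. PIdl (c i))"
proof -
  have "cw_mult R I c ` carrier (cw_add_group R I) = PiE I (\<lambda>i. (\<lambda>w. c i \<otimes> w) ` carrier R)"
    using restrict_image_PiE[where f = "\<lambda>i w. c i \<otimes> w" and A = "\<lambda>_. carrier R"]
    by (simp add: cw_mult_def)
  also have "\<dots> = PiE I (\<lambda>i. PIdl (c i))"
    by (rule PiE_cong) (use assms mult_image_carrier PiE_mem in blast)
  finally show ?thesis .
qed

lemma subgroup_index_cw_mult_image:
  assumes "finite I" "c \<in> PiE I (\<lambda>_. carrier R)"
  shows "subgroup_index (cw_add_group R I) (cw_mult R I c ` carrier (cw_add_group R I))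
           (carrier (cw_add_group R I))
       = (\<Prod>i\<in>I. card (carrier (R Quot PIdl (c i))))"
proof -
  have "subgroup (PIdl (c i)) (add_monoid R)" if "i \<in> I" for i
    using subgroup_PIdl PiE_mem[OF assms(2) that] .
  then show ?thesis
    using subgroup_index_product_group[OF assms(1), of "\<lambda>_. add_monoid R" "\<lambda>i. PIdl (c i)"] a_group
    unfolding cw_mult_image[OF assms(2)] card_Quot_eq_subgroup_index by simp
qed

lemma quot_principal_eq_rcosets:
  assumes "S \<subseteq> PiE I (\<lambda>_. carrier R)" "x \<in> PiE I (\<lambda>_. carrier R)"
  shows "quot_principal R I S x = (\<lambda>y. cw_mult R I x ` S #>\<^bsub>cw_add_group R I\<^esub> y) ` S"
  unfolding quot_principal_def
proof (rule image_cong[OF refl])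
  fix y assume y: "y \<in> S"
  have comm: "cw_add R I y (cw_mult R I x w) = cw_mult R I x w \<otimes>\<^bsub>cw_add_group R I\<^esub> y"
    if "w \<in> S" for w
  proof -
    have "y i \<oplus> x i \<otimes> w i = x i \<otimes> w i \<oplus> y i" if "i \<in> I" for i
      using assms \<open>w \<in> S\<close> y that by (intro a_comm) auto
    then show ?thesis by (auto simp: cw_add_def cw_mult_def intro!: restrict_ext)
  qed
  have "{cw_add R I y (cw_mult R I x w) |w. w \<in> S} = (\<lambda>w. cw_add R I y (cw_mult R I x w)) ` S"
    by blast
  also have "\<dots> = (\<lambda>w. cw_mult R I x w \<otimes>\<^bsub>cw_add_group R I\<^esub> y) ` S"
    by (rule image_cong[OF refl comm])
  also have "\<dots> = cw_mult R I x ` S #>\<^bsub>cw_add_group R I\<^esub> y"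
    unfolding r_coset_def by (simp only: UNION_singleton_eq_range image_image)
  finally show "{cw_add R I y (cw_mult R I x w) |w. w \<in> S} = cw_mult R I x ` S #>\<^bsub>cw_add_group R I\<^esub> y" .
qed

lemma subgroup_index_ne_0_if_contains_multiples:
  assumes "finite I" "subgroup S (cw_add_group R I)"
    and "d \<in> carrier R" "finite (carrier (R Quot PIdl d))" "PiE I (\<lambda>_. PIdl d) \<subseteq> S"
  shows "subgroup_index (cw_add_group R I) S (carrier (cw_add_group R I)) \<noteq> 0"
proof -
  let ?P = "cw_add_group R I"
  interpret P: group ?P by (rule group_cw_add_group)
  have d: "(\<lambda>_\<in>I. d) \<in> PiE I (\<lambda>_. carrier R)" using assms(3) by simp
  have "PiE I (\<lambda>i. PIdl ((\<lambda>_\<in>I. d) i)) = PiE I (\<lambda>_. PIdl d)"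
    by (rule PiE_cong) simp
  then have "subgroup_index ?P (PiE I (\<lambda>_. PIdl d)) (carrier ?P)
      = (\<Prod>i\<in>I. card (carrier (R Quot PIdl ((\<lambda>_\<in>I. d) i))))"
    using subgroup_index_cw_mult_image[OF assms(1) d] cw_mult_image[OF d] by simp
  also have "\<dots> = card (carrier (R Quot PIdl d)) ^ card I" by simp
  also have "\<dots> \<noteq> 0"
    using assms(3,4) by (auto simp: carrier_Quot_eq_image)
  moreover have "subgroup (PiE I (\<lambda>_. PIdl d)) ?P"
    using PiE_subgroup_product_group[of I "\<lambda>_. add_monoid R" "\<lambda>_. PIdl d"]
      subgroup_PIdl[OF assms(3)] a_group by simp
  then have "subgroup_index ?P (PiE I (\<lambda>_. PIdl d)) (carrier ?P)
      = subgroup_index ?P S (carrier ?P) * subgroup_index ?P (PiE I (\<lambda>_. PIdl d)) S"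
    using P.subgroup_index_tower[OF _ assms(2) P.subgroup_self assms(5)]
      subgroup.subset[OF assms(2)] by simp
  ultimately show ?thesis by (metis mult_eq_0_iff)
qed

end

context domain
begin

lemma cw_mult_inj:
  assumes "c \<in> PiE I (\<lambda>_. carrier R)" "\<And>i. i \<in> I \<Longrightarrow> c i \<noteq> \<zero>"
  shows "inj_on (cw_mult R I c) (carrier (cw_add_group R I))"
proof (rule inj_onI)
  fix u v assume u: "u \<in> carrier (cw_add_group R I)" and v: "v \<in> carrier (cw_add_group R I)"
    and eq: "cw_mult R I c u = cw_mult R I c v"
  show "u = v"
  proof (rule PiE_ext)
    fix i assume i: "i \<in> I"
    have "c i \<otimes> u i = c i \<otimes> v i" using fun_cong[OF eq, of i] i by (simp add: cw_mult_def)
    then show "u i = v i" using m_lcancel assms u v i by (simp add: PiE_iff)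
  qed (use u v in simp_all)
qed

lemma card_Quot_PIdl_mult:
  assumes a: "a \<in> carrier R" "a \<noteq> \<zero>" and b: "b \<in> carrier R"
  shows "card (carrier (R Quot PIdl (a \<otimes> b))) = card (carrier (R Quot PIdl a)) * card (carrier (R Quot PIdl b))"
proof -
  let ?A = "add_monoid R" and ?h = "\<lambda>w. a \<otimes> w"
  interpret h: group_hom ?A ?A ?h
    using a(1) by unfold_locales (auto simp: hom_def r_distr a_group)
  have inj: "inj_on ?h (carrier ?A)" using a m_lcancel by (auto simp: inj_on_def)
  have "?h ` (PIdl b) = (\<lambda>w. a \<otimes> (b \<otimes> w)) ` carrier R"
    by (simp add: mult_image_carrier[OF b, symmetric] image_image)
  also have "\<dots> = (\<lambda>w. (a \<otimes> b) \<otimes> w) ` carrier R"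
    using a b by (intro image_cong) (simp_all add: m_assoc)
  finally have img: "?h ` (PIdl b) = PIdl (a \<otimes> b)"
    using a b mult_image_carrier[of "a \<otimes> b"] by simp
  have "subgroup_index ?A (PIdl (a \<otimes> b)) (carrier R)
      = subgroup_index ?A (PIdl a) (carrier R) * subgroup_index ?A (PIdl (a \<otimes> b)) (PIdl a)"
    by (rule group.subgroup_index_tower[OF a_group])
      (use a b PIdl_mult_subset subgroup_PIdl subgroup.subset[OF subgroup_PIdl[OF a(1)]]
        group.subgroup_self[OF a_group] in auto)
  also have "subgroup_index ?A (PIdl (a \<otimes> b)) (PIdl a) = subgroup_index ?A (PIdl b) (carrier R)"
    using h.subgroup_index_image[OF inj subgroup_PIdl[OF b], of "carrier R"] img
      mult_image_carrier[OF a(1)] by simp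
  finally show ?thesis by (simp add: card_Quot_eq_subgroup_index)
qed

lemma card_Quot_PIdl_finprod:
  assumes "finite I" "x \<in> I \<rightarrow> carrier R" "\<And>i. i \<in> I \<Longrightarrow> x i \<noteq> \<zero>"
  shows "card (carrier (R Quot PIdl (\<Otimes>i\<in>I. x i))) = (\<Prod>i\<in>I. card (carrier (R Quot PIdl (x i))))"
  using assms
proof (induction I rule: finite_induct)
  case empty
  have "PIdl \<one> = carrier R" using mult_image_carrier[of \<one>] by simp
  moreover have "(\<lambda>a. carrier R #>\<^bsub>add_monoid R\<^esub> a) ` carrier R = {carrier R}"
    using group.coset_join2[OF a_group _ group.subgroup_self[OF a_group]] by force
  ultimately show ?case
    using card_Quot_eq_subgroup_index[of R "carrier R"] by (simp add: subgroup_index_def)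
next
  case (insert j I)
  then have "(\<Otimes>i\<in>insert j I. x i) = x j \<otimes> (\<Otimes>i\<in>I. x i)"
    by (intro finprod_insert) auto
  then show ?case
    using insert card_Quot_PIdl_mult[of "x j" "\<Otimes>i\<in>I. x i"] by simp
qed

lemma non_zerodivisor_coordinate_nonzero:
  assumes nzd: "non_zerodivisor R I S x" and d: "d \<in> carrier R" "d \<noteq> \<zero>"
    and multiples: "I \<rightarrow>\<^sub>E PIdl d \<subseteq> S" and S: "S \<subseteq> I \<rightarrow>\<^sub>E carrier R" and i: "i \<in> I"
  shows "x i \<noteq> \<zero>"
proof
  assume xi: "x i = \<zero>"
  let ?\<delta> = "\<lambda>j\<in>I. if j = i then d else \<zero>"
  have "d \<in> PIdl d" "\<zero> \<in> PIdl d"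
    using d additive_subgroup.zero_closed[OF ideal.axioms(1)[OF cgenideal_ideal]] cgenideal_self
    by auto
  then have "?\<delta> \<in> S" using multiples by auto
  moreover have "x \<in> I \<rightarrow>\<^sub>E carrier R" using nzd S unfolding non_zerodivisor_def by blast
  then have "cw_mult R I x ?\<delta> = cw_zero R I"
    using xi d by (auto simp: cw_mult_def cw_zero_def PiE_iff intro!: restrict_ext)
  ultimately have "?\<delta> = cw_zero R I" using nzd unfolding non_zerodivisor_def by blast
  then have "?\<delta> i = cw_zero R I i" by (rule fun_cong)
  then show False using d i by (simp add: cw_zero_def)
qed

lemma card_quot_principal_eq_card_Quot_prod:
  assumes I: "finite I" and S: "subgroup S (cw_add_group R I)"
    and x: "x \<in> I \<rightarrow>\<^sub>E carrier R" "\<And>i. i \<in> I \<Longrightarrow> x i \<noteq> \<zero>" "cw_mult R I x ` S \<subseteq> S"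
    and finite_index: "subgroup_index (cw_add_group R I) S (carrier (cw_add_group R I)) \<noteq> 0"
  shows "card (quot_principal R I S x) = card (carrier (R Quot PIdl (\<Otimes>i\<in>I. x i)))"
proof -
  let ?P = "cw_add_group R I"
  interpret P: group ?P by (rule group_cw_add_group)
  have "S \<subseteq> I \<rightarrow>\<^sub>E carrier R" using subgroup.subset[OF S] by simp
  then have "card (quot_principal R I S x) = subgroup_index ?P (cw_mult R I x ` S) S"
    unfolding subgroup_index_def using quot_principal_eq_rcosets[OF _ x(1)] by simp
  also have "\<dots> = subgroup_index ?P (cw_mult R I x ` carrier ?P) (carrier ?P)"
    by (rule P.subgroup_index_endomorphism_image[OF cw_mult_hom[OF x(1)] cw_mult_inj[OF x(1,2)] S x(3)
          finite_index])
  also have "\<dots> = (\<Prod>i\<in>I. card (carrier (R Quot PIdl (x i))))"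
    by (rule subgroup_index_cw_mult_image[OF I x(1)])
  also have "\<dots> = card (carrier (R Quot PIdl (\<Otimes>i\<in>I. x i)))"
    using card_Quot_PIdl_finprod[OF I] x(1,2) by (simp add: PiE_iff Pi_iff)
  finally show ?thesis .
qed

end

section \<open>Characters of a finite abelian group\<close>

lemma (in domain) finite_roots_of_unity:
  fixes n :: nat
  assumes "n > 0"
  shows "finite {z \<in> carrier R. z [^] n = \<one>}"
proof -
  define q where "q = monom \<one> (n - 1) @ [\<ominus> \<one>]"
  have set_q: "set q \<subseteq> carrier R" unfolding q_def monom_def by (auto simp: set_replicate_conv_if)
  then have "q \<in> carrier (poly_ring R)"
    unfolding univ_poly_carrier[symmetric] polynomial_def by (simp add: q_def monom_def)
  moreover have "{z \<in> carrier R. z [^] n = \<one>} \<subseteq> {z. is_root q z}"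
  proof clarify
    fix z assume z: "z \<in> carrier R" "z [^] n = \<one>"
    have "eval q z = eval (monom \<one> (n - 1)) z \<otimes> z \<oplus> \<ominus> \<one>"
      unfolding q_def by (rule eval_append_aux) (use z in \<open>auto simp: monom_def set_replicate_conv_if\<close>)
    also have "\<dots> = z [^] n \<ominus> \<one>"
      using eval_monom[of \<one> z "n - 1"] z assms nat_pow_Suc[of z "n - 1"] by (simp add: minus_eq)
    finally show "is_root q z" unfolding is_root_def q_def using z by simp
  qed
  ultimately show ?thesis using finite_number_of_roots finite_subset by blast
qed

definition convolution ::
    "('g, 'c) monoid_scheme \<Rightarrow> ('a, 'b) ring_scheme \<Rightarrow> ('g \<Rightarrow> 'a) \<Rightarrow> ('g \<Rightarrow> 'a) \<Rightarrow> 'g \<Rightarrow> 'a" where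
  "convolution G R a b = (\<lambda>k. \<Oplus>\<^bsub>R\<^esub> g\<in>carrier G. a g \<otimes>\<^bsub>R\<^esub> b (inv\<^bsub>G\<^esub> g \<otimes>\<^bsub>G\<^esub> k))"

locale finite_abelian_characters = G: comm_group G + O: domain Ok
  for G :: "('g, 'c) monoid_scheme" and Ok :: "('a, 'b) ring_scheme" +
  assumes finite_carrier: "finite (carrier G)"
begin

lemma character_group_hom: "\<chi> \<in> hom G (units_of Ok) \<Longrightarrow> group_hom G (units_of Ok) \<chi>"
  unfolding group_hom_def group_hom_axioms_def using G.is_group O.units_group by blast

lemma character_Units: "\<chi> \<in> hom G (units_of Ok) \<Longrightarrow> g \<in> carrier G \<Longrightarrow> \<chi> g \<in> Units Ok"
  using hom_in_carrier units_of_carrier by fastforce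

lemma character_closed: "\<chi> \<in> hom G (units_of Ok) \<Longrightarrow> g \<in> carrier G \<Longrightarrow> \<chi> g \<in> carrier Ok"
  using character_Units by blast

lemma character_mult:
  "\<chi> \<in> hom G (units_of Ok) \<Longrightarrow> g \<in> carrier G \<Longrightarrow> h \<in> carrier G \<Longrightarrow>
    \<chi> (g \<otimes>\<^bsub>G\<^esub> h) = \<chi> g \<otimes>\<^bsub>Ok\<^esub> \<chi> h"
  using hom_mult units_of_mult by metis

lemma character_inv_mult:
  assumes "\<chi> \<in> hom G (units_of Ok)" "g \<in> carrier G"
  shows "\<chi> (inv\<^bsub>G\<^esub> g) \<otimes>\<^bsub>Ok\<^esub> \<chi> g = \<one>\<^bsub>Ok\<^esub>"
  using character_mult[OF assms(1) _ assms(2), of "inv\<^bsub>G\<^esub> g"] group_hom.hom_one[OF character_group_hom[OF assms(1)]]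
    assms(2) by (simp add: units_of_one)

lemma character_pow_card:
  assumes "\<chi> \<in> hom G (units_of Ok)" "g \<in> carrier G"
  shows "\<chi> g [^]\<^bsub>Ok\<^esub> card (carrier G) = \<one>\<^bsub>Ok\<^esub>"
proof -
  interpret \<chi>: group_hom G "units_of Ok" \<chi> by (rule character_group_hom[OF assms(1)])
  have "\<chi> (g [^]\<^bsub>G\<^esub> card (carrier G)) = \<chi> g [^]\<^bsub>units_of Ok\<^esub> card (carrier G)"
    by (rule \<chi>.hom_nat_pow[OF assms(2)])
  also have "\<dots> = \<chi> g [^]\<^bsub>Ok\<^esub> card (carrier G)"
    by (rule O.units_of_pow[OF character_Units[OF assms]])
  finally show ?thesis
    using G.power_order_eq_one[OF finite_carrier assms(2)] by (simp add: units_of_one)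
qed

lemma finite_characters: "finite (characters G Ok)"
proof (rule finite_subset)
  show "characters G Ok \<subseteq> PiE (carrier G) (\<lambda>_. {z \<in> carrier Ok. z [^]\<^bsub>Ok\<^esub> card (carrier G) = \<one>\<^bsub>Ok\<^esub>})"
    unfolding characters_def PiE_def using character_closed character_pow_card by blast
  show "finite \<dots>"
    using finite_carrier O.finite_roots_of_unity card_gt_0_iff G.one_closed by (auto intro: finite_PiE)
qed

lemma sum_nontrivial_character:
  assumes \<chi>: "\<chi> \<in> hom G (units_of Ok)" and h: "h \<in> carrier G" "\<chi> h \<noteq> \<one>\<^bsub>Ok\<^esub>"
  shows "(\<Oplus>\<^bsub>Ok\<^esub> g\<in>carrier G. \<chi> g) = \<zero>\<^bsub>Ok\<^esub>"
proof -
  let ?S = "\<Oplus>\<^bsub>Ok\<^esub> g\<in>carrier G. \<chi> g"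
  have closed: "\<chi> \<in> carrier G \<rightarrow> carrier Ok" using character_closed[OF \<chi>] by blast
  have "?S = (\<Oplus>\<^bsub>Ok\<^esub> g\<in>(\<lambda>g. h \<otimes>\<^bsub>G\<^esub> g) ` carrier G. \<chi> g)"
    by (simp only: G.surj_const_mult[OF h(1)])
  also have "\<dots> = (\<Oplus>\<^bsub>Ok\<^esub> g\<in>carrier G. \<chi> (h \<otimes>\<^bsub>G\<^esub> g))"
    by (rule O.finsum_reindex) (use G.surj_const_mult[OF h(1)] G.inj_on_cmult[OF h(1)] closed in auto)
  also have "\<dots> = (\<Oplus>\<^bsub>Ok\<^esub> g\<in>carrier G. \<chi> h \<otimes>\<^bsub>Ok\<^esub> \<chi> g)"
    by (rule O.add.finprod_cong') (use character_mult[OF \<chi> h(1)] character_closed[OF \<chi>] h(1) in auto)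
  also have "\<dots> = \<chi> h \<otimes>\<^bsub>Ok\<^esub> ?S"
    by (rule O.finsum_rdistr[symmetric]) (use finite_carrier closed character_closed[OF \<chi> h(1)] in auto)
  finally have "\<chi> h \<otimes>\<^bsub>Ok\<^esub> ?S = \<one>\<^bsub>Ok\<^esub> \<otimes>\<^bsub>Ok\<^esub> ?S"
    using closed by simp
  then show ?thesis
    using O.m_rcancel[of ?S "\<chi> h" "\<one>\<^bsub>Ok\<^esub>"] closed character_closed[OF \<chi> h(1)] h(2) by auto
qed

lemma character_inv_mult_hom:
  assumes \<psi>: "\<psi> \<in> hom G (units_of Ok)" and \<phi>: "\<phi> \<in> hom G (units_of Ok)"
  shows "(\<lambda>g. \<psi> (inv\<^bsub>G\<^esub> g) \<otimes>\<^bsub>Ok\<^esub> \<phi> g) \<in> hom G (units_of Ok)"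
proof (rule homI)
  fix g k assume gk: "g \<in> carrier G" "k \<in> carrier G"
  show "\<psi> (inv\<^bsub>G\<^esub> g) \<otimes>\<^bsub>Ok\<^esub> \<phi> g \<in> carrier (units_of Ok)"
    using character_Units \<psi> \<phi> gk by (simp add: units_of_carrier)
  have "\<psi> (inv\<^bsub>G\<^esub> (g \<otimes>\<^bsub>G\<^esub> k)) \<otimes>\<^bsub>Ok\<^esub> \<phi> (g \<otimes>\<^bsub>G\<^esub> k)
      = (\<psi> (inv\<^bsub>G\<^esub> k) \<otimes>\<^bsub>Ok\<^esub> \<psi> (inv\<^bsub>G\<^esub> g)) \<otimes>\<^bsub>Ok\<^esub> (\<phi> g \<otimes>\<^bsub>Ok\<^esub> \<phi> k)"
    using gk by (simp add: G.inv_mult_group character_mult[OF \<psi>] character_mult[OF \<phi>])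
  also have "\<dots> = (\<psi> (inv\<^bsub>G\<^esub> g) \<otimes>\<^bsub>Ok\<^esub> \<phi> g) \<otimes>\<^bsub>Ok\<^esub> (\<psi> (inv\<^bsub>G\<^esub> k) \<otimes>\<^bsub>Ok\<^esub> \<phi> k)"
    using gk character_closed[OF \<psi>] character_closed[OF \<phi>] by (simp add: O.m_ac)
  finally show "\<psi> (inv\<^bsub>G\<^esub> (g \<otimes>\<^bsub>G\<^esub> k)) \<otimes>\<^bsub>Ok\<^esub> \<phi> (g \<otimes>\<^bsub>G\<^esub> k)
      = (\<psi> (inv\<^bsub>G\<^esub> g) \<otimes>\<^bsub>Ok\<^esub> \<phi> g) \<otimes>\<^bsub>units_of Ok\<^esub> (\<psi> (inv\<^bsub>G\<^esub> k) \<otimes>\<^bsub>Ok\<^esub> \<phi> k)"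
    by (simp add: units_of_mult)
qed

lemma character_orthogonality:
  assumes \<psi>: "\<psi> \<in> characters G Ok" and \<phi>: "\<phi> \<in> characters G Ok"
  shows "(\<Oplus>\<^bsub>Ok\<^esub> g\<in>carrier G. \<psi> (inv\<^bsub>G\<^esub> g) \<otimes>\<^bsub>Ok\<^esub> \<phi> g)
       = (if \<psi> = \<phi> then [card (carrier G)] \<cdot>\<^bsub>Ok\<^esub> \<one>\<^bsub>Ok\<^esub> else \<zero>\<^bsub>Ok\<^esub>)"
proof -
  have hom: "\<psi> \<in> hom G (units_of Ok)" "\<phi> \<in> hom G (units_of Ok)"
    using \<psi> \<phi> by (simp_all add: characters_def)
  show ?thesis
  proof (cases "\<psi> = \<phi>")
    case True
    have "(\<Oplus>\<^bsub>Ok\<^esub> g\<in>carrier G. \<psi> (inv\<^bsub>G\<^esub> g) \<otimes>\<^bsub>Ok\<^esub> \<phi> g)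
        = (\<Oplus>\<^bsub>Ok\<^esub> g\<in>carrier G. \<one>\<^bsub>Ok\<^esub>)"
      by (rule O.add.finprod_cong') (use True character_inv_mult[OF hom(1)] in auto)
    then show ?thesis
      using O.add.finprod_const[of "\<one>\<^bsub>Ok\<^esub>" "carrier G"] True by simp
  next
    case False
    then obtain h where h: "h \<in> carrier G" "\<psi> h \<noteq> \<phi> h"
      using \<psi> \<phi> extensionalityI unfolding characters_def by blast
    let ?\<chi> = "\<lambda>g. \<psi> (inv\<^bsub>G\<^esub> g) \<otimes>\<^bsub>Ok\<^esub> \<phi> g"
    have "?\<chi> \<in> hom G (units_of Ok)" by (rule character_inv_mult_hom[OF hom])
    moreover have "?\<chi> h \<noteq> \<one>\<^bsub>Ok\<^esub>"
    proof
      assume "?\<chi> h = \<one>\<^bsub>Ok\<^esub>"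
      then have "\<psi> h = \<psi> h \<otimes>\<^bsub>Ok\<^esub> ?\<chi> h" using character_closed[OF hom(1) h(1)] by simp
      also have "\<dots> = (\<psi> (inv\<^bsub>G\<^esub> h) \<otimes>\<^bsub>Ok\<^esub> \<psi> h) \<otimes>\<^bsub>Ok\<^esub> \<phi> h"
        using h(1) character_closed[OF hom(1)] character_closed[OF hom(2)] by (simp add: O.m_ac)
      also have "\<dots> = \<phi> h"
        using character_inv_mult[OF hom(1) h(1)] character_closed[OF hom(2) h(1)] by simp
      finally show False using h(2) by contradiction
    qed
    ultimately show ?thesis using sum_nontrivial_character[OF _ h(1)] False by simp
  qed
qed

lemma char_eval_closed:
  "\<psi> \<in> hom G (units_of Ok) \<Longrightarrow> a \<in> carrier G \<rightarrow> carrier Ok \<Longrightarrow> char_eval G Ok \<psi> a \<in> carrier Ok"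
  unfolding char_eval_def using character_closed by (intro O.finsum_closed) auto

lemma char_eval_add:
  assumes \<psi>: "\<psi> \<in> hom G (units_of Ok)" and a: "a \<in> carrier G \<rightarrow> carrier Ok" and b: "b \<in> carrier G \<rightarrow> carrier Ok"
  shows "char_eval G Ok \<psi> (\<lambda>g\<in>carrier G. a g \<oplus>\<^bsub>Ok\<^esub> b g) = char_eval G Ok \<psi> a \<oplus>\<^bsub>Ok\<^esub> char_eval G Ok \<psi> b"
proof -
  have closed: "a g \<in> carrier Ok" "b g \<in> carrier Ok" "\<psi> g \<in> carrier Ok" if "g \<in> carrier G" for g
    using a b character_closed[OF \<psi>] that by auto
  have "char_eval G Ok \<psi> (\<lambda>g\<in>carrier G. a g \<oplus>\<^bsub>Ok\<^esub> b g)
      = (\<Oplus>\<^bsub>Ok\<^esub> g\<in>carrier G. a g \<otimes>\<^bsub>Ok\<^esub> \<psi> g \<oplus>\<^bsub>Ok\<^esub> b g \<otimes>\<^bsub>Ok\<^esub> \<psi> g)"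
    unfolding char_eval_def by (rule O.add.finprod_cong') (use closed in \<open>auto simp: O.l_distr\<close>)
  also have "\<dots> = char_eval G Ok \<psi> a \<oplus>\<^bsub>Ok\<^esub> char_eval G Ok \<psi> b"
    unfolding char_eval_def by (rule O.finsum_addf) (use a b character_closed[OF \<psi>] in auto)
  finally show ?thesis .
qed

lemma char_eval_convolution:
  assumes \<psi>: "\<psi> \<in> hom G (units_of Ok)" and a: "a \<in> carrier G \<rightarrow> carrier Ok" and b: "b \<in> carrier G \<rightarrow> carrier Ok"
  shows "char_eval G Ok \<psi> (convolution G Ok a b) = char_eval G Ok \<psi> a \<otimes>\<^bsub>Ok\<^esub> char_eval G Ok \<psi> b"
proof -
  have closed: "a g \<in> carrier Ok" "b g \<in> carrier Ok" "\<psi> g \<in> carrier Ok" if "g \<in> carrier G" for g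
    using a b character_closed[OF \<psi>] that by auto
  define F where "F g k = a g \<otimes>\<^bsub>Ok\<^esub> b (inv\<^bsub>G\<^esub> g \<otimes>\<^bsub>G\<^esub> k) \<otimes>\<^bsub>Ok\<^esub> \<psi> k" for g k
  have F_closed: "F g k \<in> carrier Ok" if "g \<in> carrier G" "k \<in> carrier G" for g k
    unfolding F_def using that closed by simp
  have "char_eval G Ok \<psi> (convolution G Ok a b) = (\<Oplus>\<^bsub>Ok\<^esub> k\<in>carrier G. \<Oplus>\<^bsub>Ok\<^esub> g\<in>carrier G. F g k)"
    unfolding char_eval_def convolution_def F_def
    by (rule O.add.finprod_cong') (use finite_carrier closed in \<open>auto intro: O.finsum_ldistr\<close>)
  also have "\<dots> = (\<Oplus>\<^bsub>Ok\<^esub> g\<in>carrier G. \<Oplus>\<^bsub>Ok\<^esub> k\<in>carrier G. F g k)"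
    by (rule O.add.finprod_swap[symmetric]) (use finite_carrier F_closed in auto)
  also have "\<dots> = (\<Oplus>\<^bsub>Ok\<^esub> g\<in>carrier G. (a g \<otimes>\<^bsub>Ok\<^esub> \<psi> g) \<otimes>\<^bsub>Ok\<^esub> char_eval G Ok \<psi> b)"
  proof (rule O.add.finprod_cong')
    fix g assume g: "g \<in> carrier G"
    have "(\<Oplus>\<^bsub>Ok\<^esub> k\<in>carrier G. F g k) = (\<Oplus>\<^bsub>Ok\<^esub> k\<in>(\<lambda>h. g \<otimes>\<^bsub>G\<^esub> h) ` carrier G. F g k)"
      by (simp only: G.surj_const_mult[OF g])
    also have "\<dots> = (\<Oplus>\<^bsub>Ok\<^esub> h\<in>carrier G. F g (g \<otimes>\<^bsub>G\<^esub> h))"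
      by (rule O.finsum_reindex) (use G.surj_const_mult[OF g] G.inj_on_cmult[OF g] F_closed g in auto)
    also have "\<dots> = (\<Oplus>\<^bsub>Ok\<^esub> h\<in>carrier G. (a g \<otimes>\<^bsub>Ok\<^esub> \<psi> g) \<otimes>\<^bsub>Ok\<^esub> (b h \<otimes>\<^bsub>Ok\<^esub> \<psi> h))"
    proof (rule O.add.finprod_cong')
      fix h assume h: "h \<in> carrier G"
      have "inv\<^bsub>G\<^esub> g \<otimes>\<^bsub>G\<^esub> (g \<otimes>\<^bsub>G\<^esub> h) = h" using g h by (simp add: G.m_assoc[symmetric])
      then show "F g (g \<otimes>\<^bsub>G\<^esub> h) = (a g \<otimes>\<^bsub>Ok\<^esub> \<psi> g) \<otimes>\<^bsub>Ok\<^esub> (b h \<otimes>\<^bsub>Ok\<^esub> \<psi> h)"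
        unfolding F_def using g h closed by (simp add: character_mult[OF \<psi>] O.m_ac)
    qed (use g closed in auto)
    also have "\<dots> = (a g \<otimes>\<^bsub>Ok\<^esub> \<psi> g) \<otimes>\<^bsub>Ok\<^esub> char_eval G Ok \<psi> b"
      unfolding char_eval_def
      by (rule O.finsum_rdistr[symmetric]) (use finite_carrier g closed in auto)
    finally show "(\<Oplus>\<^bsub>Ok\<^esub> k\<in>carrier G. F g k) = (a g \<otimes>\<^bsub>Ok\<^esub> \<psi> g) \<otimes>\<^bsub>Ok\<^esub> char_eval G Ok \<psi> b" .
  qed (use closed char_eval_closed[OF \<psi> b] in auto)
  also have "\<dots> = char_eval G Ok \<psi> a \<otimes>\<^bsub>Ok\<^esub> char_eval G Ok \<psi> b"
    unfolding char_eval_def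
    by (rule O.finsum_ldistr[symmetric]) (use finite_carrier closed char_eval_closed[OF \<psi> b] in \<open>auto simp: char_eval_def\<close>)
  finally show ?thesis .
qed

lemma char_eval_restrict:
  assumes "\<psi> \<in> hom G (units_of Ok)" "a \<in> carrier G \<rightarrow> carrier Ok"
  shows "char_eval G Ok \<psi> (restrict a (carrier G)) = char_eval G Ok \<psi> a"
  unfolding char_eval_def
  by (rule O.add.finprod_cong') (use assms character_closed in auto)

lemma char_group_ring_eq_image:
  assumes "\<Psi> \<subseteq> characters G Ok"
  shows "char_group_ring G Ok \<Psi> = (\<lambda>a. \<lambda>\<psi>\<in>\<Psi>. char_eval G Ok \<psi> a) ` (carrier G \<rightarrow>\<^sub>E carrier Ok)"
proof
  show "(\<lambda>a. \<lambda>\<psi>\<in>\<Psi>. char_eval G Ok \<psi> a) ` (carrier G \<rightarrow>\<^sub>E carrier Ok) \<subseteq> char_group_ring G Ok \<Psi>"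
    unfolding char_group_ring_def by (auto simp: PiE_iff)
  show "char_group_ring G Ok \<Psi> \<subseteq> (\<lambda>a. \<lambda>\<psi>\<in>\<Psi>. char_eval G Ok \<psi> a) ` (carrier G \<rightarrow>\<^sub>E carrier Ok)"
  proof
    fix y assume "y \<in> char_group_ring G Ok \<Psi>"
    then obtain a where a: "a \<in> carrier G \<rightarrow> carrier Ok" and y: "y = (\<lambda>\<psi>\<in>\<Psi>. char_eval G Ok \<psi> a)"
      unfolding char_group_ring_def by blast
    have "y = (\<lambda>\<psi>\<in>\<Psi>. char_eval G Ok \<psi> (restrict a (carrier G)))"
      unfolding y using assms a char_eval_restrict by (auto simp: characters_def intro!: restrict_ext)
    then show "y \<in> (\<lambda>a. \<lambda>\<psi>\<in>\<Psi>. char_eval G Ok \<psi> a) ` (carrier G \<rightarrow>\<^sub>E carrier Ok)"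
      using a by auto
  qed
qed

lemma subgroup_char_group_ring:
  assumes "\<Psi> \<subseteq> characters G Ok"
  shows "subgroup (char_group_ring G Ok \<Psi>) (cw_add_group Ok \<Psi>)"
proof -
  have \<Psi>: "\<psi> \<in> hom G (units_of Ok)" if "\<psi> \<in> \<Psi>" for \<psi>
    using assms that by (auto simp: characters_def)
  have "group_hom (cw_add_group Ok (carrier G)) (cw_add_group Ok \<Psi>)
      (\<lambda>a. \<lambda>\<psi>\<in>\<Psi>. char_eval G Ok \<psi> a)"
  proof (intro group_hom.intro group_hom_axioms.intro homI)
    fix a b assume "a \<in> carrier (cw_add_group Ok (carrier G))"
      "b \<in> carrier (cw_add_group Ok (carrier G))"
    then show "(\<lambda>\<psi>\<in>\<Psi>. char_eval G Ok \<psi> (a \<otimes>\<^bsub>cw_add_group Ok (carrier G)\<^esub> b))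
        = (\<lambda>\<psi>\<in>\<Psi>. char_eval G Ok \<psi> a) \<otimes>\<^bsub>cw_add_group Ok \<Psi>\<^esub> (\<lambda>\<psi>\<in>\<Psi>. char_eval G Ok \<psi> b)"
      using \<Psi> char_eval_add by (auto simp: PiE_iff intro!: restrict_ext)
  qed (use \<Psi> char_eval_closed O.a_group in \<open>auto simp: PiE_iff\<close>)
  then show ?thesis
    using group_hom.img_is_subgroup char_group_ring_eq_image[OF assms] by fastforce
qed

lemma char_group_ring_cw_mult_closed:
  assumes "\<Psi> \<subseteq> characters G Ok" "x \<in> char_group_ring G Ok \<Psi>" "y \<in> char_group_ring G Ok \<Psi>"
  shows "cw_mult Ok \<Psi> x y \<in> char_group_ring G Ok \<Psi>"
proof -
  obtain a b where ab: "a \<in> carrier G \<rightarrow> carrier Ok" "b \<in> carrier G \<rightarrow> carrier Ok"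
    and xy: "x = (\<lambda>\<psi>\<in>\<Psi>. char_eval G Ok \<psi> a)" "y = (\<lambda>\<psi>\<in>\<Psi>. char_eval G Ok \<psi> b)"
    using assms(2,3) unfolding char_group_ring_def by blast
  have "convolution G Ok a b \<in> carrier G \<rightarrow> carrier Ok"
    unfolding convolution_def using ab by (auto simp: Pi_iff intro!: O.finsum_closed)
  moreover have "cw_mult Ok \<Psi> x y = (\<lambda>\<psi>\<in>\<Psi>. char_eval G Ok \<psi> (convolution G Ok a b))"
    unfolding cw_mult_def xy using assms(1) ab char_eval_convolution
    by (auto simp: characters_def intro!: restrict_ext)
  ultimately show ?thesis unfolding char_group_ring_def by blast
qed

lemma char_eval_inverse_transform:
  assumes \<Psi>: "\<Psi> \<subseteq> characters G Ok" and f: "f \<in> \<Psi> \<rightarrow>\<^sub>E carrier Ok" and \<phi>: "\<phi> \<in> \<Psi>"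
  shows "char_eval G Ok \<phi> (\<lambda>g. \<Oplus>\<^bsub>Ok\<^esub> \<psi>\<in>\<Psi>. f \<psi> \<otimes>\<^bsub>Ok\<^esub> \<psi> (inv\<^bsub>G\<^esub> g))
       = [card (carrier G)] \<cdot>\<^bsub>Ok\<^esub> \<one>\<^bsub>Ok\<^esub> \<otimes>\<^bsub>Ok\<^esub> f \<phi>"
proof -
  let ?N = "[card (carrier G)] \<cdot>\<^bsub>Ok\<^esub> \<one>\<^bsub>Ok\<^esub>"
  have fin: "finite \<Psi>" using finite_subset[OF \<Psi> finite_characters] .
  have closed: "\<psi> g \<in> carrier Ok" if "\<psi> \<in> \<Psi>" "g \<in> carrier G" for \<psi> g
    using character_closed \<Psi> that by (auto simp: characters_def)
  have f_closed: "f \<psi> \<in> carrier Ok" if "\<psi> \<in> \<Psi>" for \<psi>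
    using f that by auto
  define F where "F g \<psi> = f \<psi> \<otimes>\<^bsub>Ok\<^esub> (\<psi> (inv\<^bsub>G\<^esub> g) \<otimes>\<^bsub>Ok\<^esub> \<phi> g)" for g \<psi>
  have F_closed: "F g \<psi> \<in> carrier Ok" if "g \<in> carrier G" "\<psi> \<in> \<Psi>" for g \<psi>
    unfolding F_def using that closed f_closed \<phi> by simp
  have "char_eval G Ok \<phi> (\<lambda>g. \<Oplus>\<^bsub>Ok\<^esub> \<psi>\<in>\<Psi>. f \<psi> \<otimes>\<^bsub>Ok\<^esub> \<psi> (inv\<^bsub>G\<^esub> g))
      = (\<Oplus>\<^bsub>Ok\<^esub> g\<in>carrier G. \<Oplus>\<^bsub>Ok\<^esub> \<psi>\<in>\<Psi>. F g \<psi>)"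
    unfolding char_eval_def
  proof (rule O.add.finprod_cong')
    fix g assume g: "g \<in> carrier G"
    have "(\<Oplus>\<^bsub>Ok\<^esub> \<psi>\<in>\<Psi>. f \<psi> \<otimes>\<^bsub>Ok\<^esub> \<psi> (inv\<^bsub>G\<^esub> g)) \<otimes>\<^bsub>Ok\<^esub> \<phi> g
        = (\<Oplus>\<^bsub>Ok\<^esub> \<psi>\<in>\<Psi>. (f \<psi> \<otimes>\<^bsub>Ok\<^esub> \<psi> (inv\<^bsub>G\<^esub> g)) \<otimes>\<^bsub>Ok\<^esub> \<phi> g)"
      by (rule O.finsum_ldistr) (use fin g closed f_closed \<phi> in auto)
    also have "\<dots> = (\<Oplus>\<^bsub>Ok\<^esub> \<psi>\<in>\<Psi>. F g \<psi>)"
      unfolding F_def by (rule O.add.finprod_cong') (use g closed f_closed \<phi> in \<open>auto simp: O.m_assoc\<close>)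
    finally show "(\<Oplus>\<^bsub>Ok\<^esub> \<psi>\<in>\<Psi>. f \<psi> \<otimes>\<^bsub>Ok\<^esub> \<psi> (inv\<^bsub>G\<^esub> g)) \<otimes>\<^bsub>Ok\<^esub> \<phi> g = (\<Oplus>\<^bsub>Ok\<^esub> \<psi>\<in>\<Psi>. F g \<psi>)" .
  qed (use F_closed fin in auto)
  also have "\<dots> = (\<Oplus>\<^bsub>Ok\<^esub> \<psi>\<in>\<Psi>. \<Oplus>\<^bsub>Ok\<^esub> g\<in>carrier G. F g \<psi>)"
    by (rule O.add.finprod_swap) (use finite_carrier fin F_closed in auto)
  also have "\<dots> = (\<Oplus>\<^bsub>Ok\<^esub> \<psi>\<in>\<Psi>. if \<phi> = \<psi> then ?N \<otimes>\<^bsub>Ok\<^esub> f \<psi> else \<zero>\<^bsub>Ok\<^esub>)"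
  proof (rule O.add.finprod_cong')
    fix \<psi> assume \<psi>: "\<psi> \<in> \<Psi>"
    have "(\<Oplus>\<^bsub>Ok\<^esub> g\<in>carrier G. F g \<psi>)
        = f \<psi> \<otimes>\<^bsub>Ok\<^esub> (\<Oplus>\<^bsub>Ok\<^esub> g\<in>carrier G. \<psi> (inv\<^bsub>G\<^esub> g) \<otimes>\<^bsub>Ok\<^esub> \<phi> g)"
      unfolding F_def by (rule O.finsum_rdistr[symmetric]) (use finite_carrier closed f_closed \<phi> \<psi> in auto)
    then show "(\<Oplus>\<^bsub>Ok\<^esub> g\<in>carrier G. F g \<psi>) = (if \<phi> = \<psi> then ?N \<otimes>\<^bsub>Ok\<^esub> f \<psi> else \<zero>\<^bsub>Ok\<^esub>)"
      using character_orthogonality[OF subsetD[OF \<Psi> \<psi>] subsetD[OF \<Psi> \<phi>]] \<psi> f_closed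
      by (auto simp: O.m_comm)
  qed (use f_closed in auto)
  also have "\<dots> = ?N \<otimes>\<^bsub>Ok\<^esub> f \<phi>"
    by (rule O.add.finprod_singleton) (use \<phi> fin f_closed in auto)
  finally show ?thesis .
qed

lemma card_multiple_in_char_group_ring:
  assumes \<Psi>: "\<Psi> \<subseteq> characters G Ok" and f: "f \<in> \<Psi> \<rightarrow>\<^sub>E carrier Ok"
  shows "(\<lambda>\<psi>\<in>\<Psi>. [card (carrier G)] \<cdot>\<^bsub>Ok\<^esub> \<one>\<^bsub>Ok\<^esub> \<otimes>\<^bsub>Ok\<^esub> f \<psi>) \<in> char_group_ring G Ok \<Psi>"
proof -
  let ?a = "\<lambda>g. \<Oplus>\<^bsub>Ok\<^esub> \<psi>\<in>\<Psi>. f \<psi> \<otimes>\<^bsub>Ok\<^esub> \<psi> (inv\<^bsub>G\<^esub> g)"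
  have "?a \<in> carrier G \<rightarrow> carrier Ok"
    using \<Psi> f character_closed by (auto simp: characters_def PiE_iff intro!: O.finsum_closed)
  moreover have "(\<lambda>\<psi>\<in>\<Psi>. [card (carrier G)] \<cdot>\<^bsub>Ok\<^esub> \<one>\<^bsub>Ok\<^esub> \<otimes>\<^bsub>Ok\<^esub> f \<psi>) = (\<lambda>\<psi>\<in>\<Psi>. char_eval G Ok \<psi> ?a)"
    using char_eval_inverse_transform[OF \<Psi> f] by (intro restrict_ext) simp
  ultimately show ?thesis unfolding char_group_ring_def by blast
qed

lemma PiE_PIdl_card_subset_char_group_ring:
  assumes "\<Psi> \<subseteq> characters G Ok"
  shows "\<Psi> \<rightarrow>\<^sub>E PIdl\<^bsub>Ok\<^esub> ([card (carrier G)] \<cdot>\<^bsub>Ok\<^esub> \<one>\<^bsub>Ok\<^esub>) \<subseteq> char_group_ring G Ok \<Psi>"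
proof -
  let ?N = "[card (carrier G)] \<cdot>\<^bsub>Ok\<^esub> \<one>\<^bsub>Ok\<^esub>"
  have "\<Psi> \<rightarrow>\<^sub>E PIdl\<^bsub>Ok\<^esub> ?N = (\<lambda>f. \<lambda>\<psi>\<in>\<Psi>. ?N \<otimes>\<^bsub>Ok\<^esub> f \<psi>) ` (\<Psi> \<rightarrow>\<^sub>E carrier Ok)"
    using restrict_image_PiE[where f = "\<lambda>_ w. ?N \<otimes>\<^bsub>Ok\<^esub> w" and A = "\<lambda>_. carrier Ok" and I = \<Psi>]
      O.mult_image_carrier[of ?N] by simp
  then show ?thesis using card_multiple_in_char_group_ring[OF assms] by auto
qed

end

section \<open>Finite extensions of \<open>\<int>\<^sub>p\<close>\<close>

definition Zp_of_int :: "int \<Rightarrow> int \<Rightarrow> nat \<Rightarrow> int" where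
  "Zp_of_int p m = (\<lambda>n. m mod p ^ n)"

lemma Zp_of_int_carrier:
  assumes "p > 1" shows "Zp_of_int p m \<in> carrier (Zp p)"
proof -
  have "m mod p ^ Suc n mod p ^ n = m mod p ^ n" for n
    by (rule mod_mod_cancel) (rule le_imp_power_dvd, simp)
  then show ?thesis using assms unfolding Zp_def Zp_of_int_def by simp
qed

lemma Zp_of_int_add: "add (Zp p) (Zp_of_int p a) (Zp_of_int p b) = Zp_of_int p (a + b)"
  unfolding Zp_def Zp_of_int_def by (simp add: mod_add_eq)

lemma Zp_of_int_mult: "mult (Zp p) (Zp_of_int p a) (Zp_of_int p b) = Zp_of_int p (a * b)"
  unfolding Zp_def Zp_of_int_def by (simp add: mod_mult_eq)

lemma Zp_of_int_one: "one (Zp p) = Zp_of_int p 1"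
  unfolding Zp_def Zp_of_int_def by simp

lemma Zp_mod_power:
  assumes "c \<in> carrier (Zp p)"
  shows "c (n + k) mod p ^ n = c n"
proof (induction k)
  case 0
  then show ?case using assms by (simp add: Zp_def)
next
  case (Suc k)
  have "c (n + Suc k) mod p ^ n = c (Suc (n + k)) mod p ^ (n + k) mod p ^ n"
    by (simp add: mod_mod_cancel le_imp_power_dvd)
  then show ?case using Suc.IH assms by (simp add: Zp_def)
qed

lemma Zp_mult_closed:
  assumes "p > 1" "f \<in> carrier (Zp p)" "g \<in> carrier (Zp p)"
  shows "mult (Zp p) f g \<in> carrier (Zp p)"
proof -
  have "(f (Suc n) * g (Suc n)) mod p ^ Suc n mod p ^ n = (f n * g n) mod p ^ n" for n
  proof -
    have "(f (Suc n) * g (Suc n)) mod p ^ Suc n mod p ^ n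
        = (f (Suc n) mod p ^ n) * (g (Suc n) mod p ^ n) mod p ^ n"
      by (simp add: mod_mod_cancel le_imp_power_dvd mod_mult_eq)
    then show ?thesis using assms(2,3) by (simp add: Zp_def)
  qed
  then show ?thesis using assms(1) by (simp add: Zp_def)
qed

lemma Zp_truncation_decomp:
  assumes p: "p > 1" and c: "c \<in> carrier (Zp p)"
  shows "\<exists>e\<in>carrier (Zp p). c = add (Zp p) (Zp_of_int p (c v)) (mult (Zp p) (Zp_of_int p (p ^ v)) e)"
proof -
  define D where "D n = c (n + v) div p ^ v" for n
  define e where "e n = D n mod p ^ n" for n
  have c_D: "c (n + v) = p ^ v * D n + c v" for n
    using Zp_mod_power[OF c, of v n] minus_mod_eq_mult_div[of "c (n + v)" "p ^ v"]
    unfolding D_def by (simp add: add.commute)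
  have "e \<in> carrier (Zp p)"
  proof -
    have "p ^ v * p ^ n dvd c (Suc (n + v)) - c (n + v)" for n
      using Zp_mod_power[OF c, of "n + v" 1] mod_eq_dvd_iff Zp_mod_power[OF c, of "n + v" 0]
      by (metis Suc_eq_plus1 add_0_right power_add mult.commute)
    moreover have "c (Suc (n + v)) - c (n + v) = p ^ v * (D (Suc n) - D n)" for n
      using c_D[of "Suc n"] c_D[of n] by (simp add: algebra_simps)
    ultimately have "p ^ n dvd D (Suc n) - D n" for n
      using p by (metis dvd_mult_cancel_left power_not_zero not_one_less_zero zero_less_one
        less_trans order_less_irrefl)
    then have "D (Suc n) mod p ^ n = D n mod p ^ n" for n
      using p by (simp add: mod_eq_dvd_iff)
    then show ?thesis
      using p unfolding Zp_def e_def by (simp add: mod_mod_cancel le_imp_power_dvd)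
  qed
  moreover have "c = add (Zp p) (Zp_of_int p (c v)) (mult (Zp p) (Zp_of_int p (p ^ v)) e)"
  proof
    fix n
    have "add (Zp p) (Zp_of_int p (c v)) (mult (Zp p) (Zp_of_int p (p ^ v)) e) n = (c v + p ^ v * D n) mod p ^ n"
      unfolding Zp_def Zp_of_int_def e_def by (simp add: mod_add_eq mod_mult_eq)
    also have "\<dots> = c n" using c_D[of n] Zp_mod_power[OF c, of n v] by (simp add: add.commute)
    finally show "c n = add (Zp p) (Zp_of_int p (c v)) (mult (Zp p) (Zp_of_int p (p ^ v)) e) n" ..
  qed
  ultimately show ?thesis by blast
qed

lemma Zp_of_int_unit:
  assumes p: "prime p" and u: "\<not> p dvd u"
  shows "\<exists>e\<in>carrier (Zp p). mult (Zp p) (Zp_of_int p u) e = one (Zp p)"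
proof -
  have inverse: "\<exists>s. 0 \<le> s \<and> s < p ^ n \<and> (u * s) mod p ^ n = 1 mod p ^ n" for n
  proof -
    have "coprime u (p ^ n)" using prime_imp_coprime[OF p u] by (simp add: coprime_commute)
    then obtain s t where "s * u + t * p ^ n = 1" using bezout_int[of u "p ^ n"] by auto
    then have "(u * s) mod p ^ n = 1 mod p ^ n"
      by (metis mod_mult_self2 mult.commute add.commute)
    moreover have "p ^ n > 0" using p prime_gt_0_int by simp
    ultimately show ?thesis
      by (intro exI[of _ "s mod p ^ n"]) (simp add: mod_mult_right_eq)
  qed
  define e where "e n = (SOME s. 0 \<le> s \<and> s < p ^ n \<and> (u * s) mod p ^ n = 1 mod p ^ n)" for n
  have e: "0 \<le> e n" "e n < p ^ n" "(u * e n) mod p ^ n = 1 mod p ^ n" for n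
    using someI_ex[OF inverse[of n]] unfolding e_def by auto
  have "e (Suc n) mod p ^ n = e n" for n
  proof -
    have "(u * e (Suc n)) mod p ^ n = 1 mod p ^ n"
      using e(3)[of "Suc n"] by (metis mod_mod_cancel le_imp_power_dvd le_SucI order_refl)
    then have "e n mod p ^ n = e n * (u * e (Suc n)) mod p ^ n"
      by (metis mod_mult_right_eq mult.right_neutral)
    also have "\<dots> = e (Suc n) * (u * e n) mod p ^ n" by (simp add: ac_simps)
    also have "\<dots> = e (Suc n) mod p ^ n"
      using e(3)[of n] by (metis mod_mult_right_eq mult.right_neutral)
    finally show ?thesis using e(1,2)[of n] by simp
  qed
  then have "e \<in> carrier (Zp p)"
    using e(1,2) by (simp add: Zp_def)
  moreover have "mult (Zp p) (Zp_of_int p u) e = one (Zp p)"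
    using e(3) by (auto simp: Zp_def Zp_of_int_def mod_mult_left_eq)
  ultimately show ?thesis by blast
qed

locale finite_Zp_extension =
  fixes p :: int and Ok :: "('a, 'b) ring_scheme" and iota :: "(nat \<Rightarrow> int) \<Rightarrow> 'a"
  assumes prime_p: "prime p" and finite_ext: "finite_ext_Zp p Ok iota"
begin

sublocale O: domain Ok
  using finite_ext principal_domain.axioms(1) unfolding finite_ext_Zp_def by blast

lemma p_gt_1: "p > 1"
  using prime_p prime_gt_1_int by blast

lemma iota_hom: "iota \<in> ring_hom (Zp p) Ok"
  using finite_ext unfolding finite_ext_Zp_def by blast

lemma iota_Zp_of_int_closed: "iota (Zp_of_int p m) \<in> carrier Ok"
  using ring_hom_closed[OF iota_hom Zp_of_int_carrier[OF p_gt_1]] .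

lemma iota_Zp_of_int_add:
  "iota (Zp_of_int p (a + b)) = iota (Zp_of_int p a) \<oplus>\<^bsub>Ok\<^esub> iota (Zp_of_int p b)"
  using ring_hom_add[OF iota_hom Zp_of_int_carrier[OF p_gt_1] Zp_of_int_carrier[OF p_gt_1]]
  by (simp add: Zp_of_int_add)

lemma iota_Zp_of_int_mult:
  "iota (Zp_of_int p (a * b)) = iota (Zp_of_int p a) \<otimes>\<^bsub>Ok\<^esub> iota (Zp_of_int p b)"
  using ring_hom_mult[OF iota_hom Zp_of_int_carrier[OF p_gt_1] Zp_of_int_carrier[OF p_gt_1]]
  by (simp add: Zp_of_int_mult)

lemma iota_Zp_of_nat: "iota (Zp_of_int p (int m)) = [m] \<cdot>\<^bsub>Ok\<^esub> \<one>\<^bsub>Ok\<^esub>"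
proof (induction m)
  case 0
  have "iota (Zp_of_int p 0) \<oplus>\<^bsub>Ok\<^esub> iota (Zp_of_int p 0) = iota (Zp_of_int p 0)"
    using iota_Zp_of_int_add[of 0 0] by simp
  then show ?case
    using O.add.r_cancel_one[OF iota_Zp_of_int_closed iota_Zp_of_int_closed] by simp
next
  case (Suc m)
  have "iota (Zp_of_int p 1) = \<one>\<^bsub>Ok\<^esub>"
    using ring_hom_one[OF iota_hom] by (simp add: Zp_of_int_one)
  then show ?case
    using iota_Zp_of_int_add[of "int m" 1] Suc.IH by (simp add: add.commute O.add.nat_pow_Suc)
qed

lemma of_nat_ne_zero:
  fixes n :: nat
  assumes "n > 0" shows "[n] \<cdot>\<^bsub>Ok\<^esub> \<one>\<^bsub>Ok\<^esub> \<noteq> \<zero>\<^bsub>Ok\<^esub>"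
proof
  assume "[n] \<cdot>\<^bsub>Ok\<^esub> \<one>\<^bsub>Ok\<^esub> = \<zero>\<^bsub>Ok\<^esub>"
  then have "iota (Zp_of_int p (int n)) = iota (Zp_of_int p (int 0))"
    using iota_Zp_of_nat[of n] iota_Zp_of_nat[of 0] by simp
  then have "Zp_of_int p (int n) = Zp_of_int p 0"
    using finite_ext Zp_of_int_carrier[OF p_gt_1] unfolding finite_ext_Zp_def inj_on_def by auto
  then have "int n mod p ^ n = 0" unfolding Zp_of_int_def by (metis mod_0)
  moreover have "int n < 2 ^ n" using of_nat_less_two_power[of n, where 'a = int] by simp
  moreover have "(2::int) ^ n \<le> p ^ n" using p_gt_1 by (intro power_mono) auto
  ultimately show False using assms by simp
qed

lemma iota_truncation_decomp:
  assumes "c \<in> carrier (Zp p)"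
  shows "\<exists>y\<in>carrier Ok.
    iota c = iota (Zp_of_int p (c v)) \<oplus>\<^bsub>Ok\<^esub> iota (Zp_of_int p (p ^ v)) \<otimes>\<^bsub>Ok\<^esub> y"
proof -
  obtain e where e: "e \<in> carrier (Zp p)"
    and c: "c = add (Zp p) (Zp_of_int p (c v)) (mult (Zp p) (Zp_of_int p (p ^ v)) e)"
    using Zp_truncation_decomp[OF p_gt_1 assms] by blast
  have "iota c = iota (add (Zp p) (Zp_of_int p (c v)) (mult (Zp p) (Zp_of_int p (p ^ v)) e))"
    using arg_cong[OF c, of iota] .
  also have "\<dots> = iota (Zp_of_int p (c v)) \<oplus>\<^bsub>Ok\<^esub> iota (mult (Zp p) (Zp_of_int p (p ^ v)) e)"
    by (rule ring_hom_add[OF iota_hom Zp_of_int_carrier[OF p_gt_1]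
          Zp_mult_closed[OF p_gt_1 Zp_of_int_carrier[OF p_gt_1] e]])
  also have "iota (mult (Zp p) (Zp_of_int p (p ^ v)) e) = iota (Zp_of_int p (p ^ v)) \<otimes>\<^bsub>Ok\<^esub> iota e"
    by (rule ring_hom_mult[OF iota_hom Zp_of_int_carrier[OF p_gt_1] e])
  finally show ?thesis using ring_hom_closed[OF iota_hom e] by blast
qed

lemma finite_Quot_prime_power: "finite (carrier (Ok Quot PIdl\<^bsub>Ok\<^esub> (iota (Zp_of_int p (p ^ v)))))"
proof -
  obtain B where B: "finite B" "B \<subseteq> carrier Ok"
    and span: "\<forall>a\<in>carrier Ok. \<exists>c. c \<in> B \<rightarrow> carrier (Zp p) \<and>
      a = (\<Oplus>\<^bsub>Ok\<^esub> b\<in>B. iota (c b) \<otimes>\<^bsub>Ok\<^esub> b)"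
    using finite_ext unfolding finite_ext_Zp_def by (elim conjE exE)
  show ?thesis
  proof (rule O.finite_Quot_PIdl_if_finite_residues[OF iota_Zp_of_int_closed B, where C = "iota ` carrier (Zp p)"])
    show "finite ((\<lambda>k. iota (Zp_of_int p k)) ` {0..<p ^ v})" by simp
    show "(\<lambda>k. iota (Zp_of_int p k)) ` {0..<p ^ v} \<subseteq> carrier Ok" using iota_Zp_of_int_closed by auto
    show "\<exists>c\<in>B \<rightarrow> iota ` carrier (Zp p). a = (\<Oplus>\<^bsub>Ok\<^esub> b\<in>B. c b \<otimes>\<^bsub>Ok\<^esub> b)"
      if a: "a \<in> carrier Ok" for a
    proof -
      obtain c where "c \<in> B \<rightarrow> carrier (Zp p)" "a = (\<Oplus>\<^bsub>Ok\<^esub> b\<in>B. iota (c b) \<otimes>\<^bsub>Ok\<^esub> b)"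
        using bspec[OF span a] by (elim exE conjE)
      moreover have "(\<lambda>b. iota (c b)) \<in> B \<rightarrow> iota ` carrier (Zp p)" using calculation(1) by auto
      ultimately show ?thesis by (intro bexI[of _ "\<lambda>b. iota (c b)"]) simp_all
    qed
    show "\<exists>s\<in>(\<lambda>k. iota (Zp_of_int p k)) ` {0..<p ^ v}. \<exists>y\<in>carrier Ok.
        x = s \<oplus>\<^bsub>Ok\<^esub> iota (Zp_of_int p (p ^ v)) \<otimes>\<^bsub>Ok\<^esub> y" if "x \<in> iota ` carrier (Zp p)" for x
    proof -
      obtain c where c: "c \<in> carrier (Zp p)" "x = iota c" using \<open>x \<in> iota ` carrier (Zp p)\<close> by blast
      then have "c v \<in> {0..<p ^ v}" by (simp add: Zp_def)
      then have s: "iota (Zp_of_int p (c v)) \<in> (\<lambda>k. iota (Zp_of_int p k)) ` {0..<p ^ v}" by (rule imageI)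
      obtain y where y: "y \<in> carrier Ok"
        "iota c = iota (Zp_of_int p (c v)) \<oplus>\<^bsub>Ok\<^esub> iota (Zp_of_int p (p ^ v)) \<otimes>\<^bsub>Ok\<^esub> y"
        using iota_truncation_decomp[OF c(1), of v] by blast
      show ?thesis using s y c(2) by blast
    qed
  qed
qed

lemma finite_Quot_of_nat:
  fixes n :: nat
  assumes "n > 0" shows "finite (carrier (Ok Quot PIdl\<^bsub>Ok\<^esub> ([n] \<cdot>\<^bsub>Ok\<^esub> \<one>\<^bsub>Ok\<^esub>)))"
proof -
  (* n = p^v u with u a unit of Z_p, so p^v lies in n O. *)
  obtain u where u: "int n = p ^ multiplicity p (int n) * u" "\<not> p dvd u"
    using multiplicity_decompose'[of "int n" p] assms p_gt_1 by auto
  let ?v = "multiplicity p (int n)"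
  obtain e where e: "e \<in> carrier (Zp p)" "mult (Zp p) (Zp_of_int p u) e = one (Zp p)"
    using Zp_of_int_unit[OF prime_p u(2)] by blast
  have "iota (Zp_of_int p u) \<otimes>\<^bsub>Ok\<^esub> iota e = \<one>\<^bsub>Ok\<^esub>"
    using ring_hom_mult[OF iota_hom Zp_of_int_carrier[OF p_gt_1, of u] e(1)] e(2) ring_hom_one[OF iota_hom]
    by simp
  then have "iota (Zp_of_int p (p ^ ?v)) = [n] \<cdot>\<^bsub>Ok\<^esub> \<one>\<^bsub>Ok\<^esub> \<otimes>\<^bsub>Ok\<^esub> iota e"
    using iota_Zp_of_nat[of n] iota_Zp_of_int_mult[of "p ^ ?v" u] u(1) iota_Zp_of_int_closed
      ring_hom_closed[OF iota_hom e(1)] by (simp add: O.m_assoc)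
  then have "PIdl\<^bsub>Ok\<^esub> (iota (Zp_of_int p (p ^ ?v))) \<subseteq> PIdl\<^bsub>Ok\<^esub> ([n] \<cdot>\<^bsub>Ok\<^esub> \<one>\<^bsub>Ok\<^esub>)"
    using O.PIdl_mult_subset ring_hom_closed[OF iota_hom e(1)] by simp
  then show ?thesis
    using O.finite_Quot_PIdl_mono[OF iota_Zp_of_int_closed _ _ finite_Quot_prime_power] by simp
qed

end

theorem lemma2p5:
  fixes G :: "('g, 'c) monoid_scheme"
    and Ok :: "('a, 'b) ring_scheme"
    and p :: int
    and iota :: "(nat \<Rightarrow> int) \<Rightarrow> 'a"
    and \<Psi> :: "('g \<Rightarrow> 'a) set"
    and x :: "('g \<Rightarrow> 'a) \<Rightarrow> 'a"
  assumes "comm_group G" and "finite (carrier G)"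
    and "Factorial_Ring.prime p" and "odd p"
    and "finite_ext_Zp p Ok iota"
    and "contains_char_values G Ok"
    and "\<Psi> \<subseteq> characters G Ok"
    and "x \<in> char_group_ring G Ok \<Psi>"
    and "non_zerodivisor Ok \<Psi> (char_group_ring G Ok \<Psi>) x"
  shows "card (quot_principal Ok \<Psi> (char_group_ring G Ok \<Psi>) x)
         = card (carrier (Ok Quot (PIdl\<^bsub>Ok\<^esub> (\<Otimes>\<^bsub>Ok\<^esub> \<psi>\<in>\<Psi>. x \<psi>))))"
proof -
  interpret finite_Zp_extension p Ok iota using assms(3,5) by unfold_locales
  interpret finite_abelian_characters G Ok
    using assms(1,2) O.domain_axioms by (intro finite_abelian_characters.intro finite_abelian_characters_axioms.intro)
  let ?R = "char_group_ring G Ok \<Psi>" and ?N = "[card (carrier G)] \<cdot>\<^bsub>Ok\<^esub> \<one>\<^bsub>Ok\<^esub>"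
  have "card (carrier G) > 0" using finite_carrier G.one_closed card_gt_0_iff by blast
  then have N: "?N \<noteq> \<zero>\<^bsub>Ok\<^esub>" "finite (carrier (Ok Quot PIdl\<^bsub>Ok\<^esub> ?N))"
    by (rule of_nat_ne_zero, rule finite_Quot_of_nat)
  have \<Psi>: "finite \<Psi>" using finite_subset[OF assms(7) finite_characters] .
  have R: "subgroup ?R (cw_add_group Ok \<Psi>)" by (rule subgroup_char_group_ring[OF assms(7)])
  have multiples: "\<Psi> \<rightarrow>\<^sub>E PIdl\<^bsub>Ok\<^esub> ?N \<subseteq> ?R" by (rule PiE_PIdl_card_subset_char_group_ring[OF assms(7)])
  have R_sub: "?R \<subseteq> \<Psi> \<rightarrow>\<^sub>E carrier Ok" using subgroup.subset[OF R] by simp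
  show ?thesis
  proof (rule O.card_quot_principal_eq_card_Quot_prod[OF \<Psi> R])
    show "x \<in> \<Psi> \<rightarrow>\<^sub>E carrier Ok" using assms(8) R_sub by blast
    show "x \<psi> \<noteq> \<zero>\<^bsub>Ok\<^esub>" if "\<psi> \<in> \<Psi>" for \<psi>
      using O.non_zerodivisor_coordinate_nonzero[OF assms(9) _ N(1) multiples R_sub that] by simp
    show "cw_mult Ok \<Psi> x ` ?R \<subseteq> ?R"
      using char_group_ring_cw_mult_closed[OF assms(7,8)] by blast
    show "subgroup_index (cw_add_group Ok \<Psi>) ?R (carrier (cw_add_group Ok \<Psi>)) \<noteq> 0"
      using O.subgroup_index_ne_0_if_contains_multiples[OF \<Psi> R _ N(2) multiples] by simp
  qed
qed

end
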